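(* Fix an algorithm $\mathscr{A}$ run for $T$ rounds on a two-stage causal MDP instance, and an intermediate state $i$ with $m_i\ge1$. Let $Tr_i$ be the expected number of visits to state $i$, let $N_{(a,i)}$ be the expected number of times $\mathscr{A}$ explicitly performs $a$ at state $i$, let $\mathcal{J}_i=\{a\in\mathcal{I}_{m_i}:N_{(a,i)}\le 2Tr_i/m_i\}$, and let $T_{(a,i)}$ be the (random) number of rounds in which intervention $a$ is observed at state $i$. Then for every $a\in\mathcal{J}_i$, $$\mathbb{E}[T_{(a,i)}]\le\frac{3Tr_i}{m_i}.$$
   Context: Two-stage causal MDP: start state $0$, intermediate states $[k]$; at each state $i$ there are independent Bernoulli variables $X^i_1,\dots,X^i_n$ with $q^i_j=\mathbb{P}\{X^i_j=1\}$, drawn afresh each round independently of which state is visited; atomic interventions $\mathcal{I}_i=\{do()\}\cup\{do(X^i_j=0),do(X^i_j=1):j\in[n]\}$, where $do(X^i_j=x)$ sets $X^i_j=x$ and leaves the other variables random. In each of $T$ rounds the algorithm performs an intervention at state $0$, transitions randomly to some intermediate state $i$, and performs one intervention in $\mathcal{I}_i$, observing all $X^i_j$. Intervention $a=do(X^i_j=1)$ is said to be observed at state $i$ in a round if state $i$ is visited and $X^i_j=1$ in that round (whether because $a$ was performed or because the variable took that value naturally). Sorting $q^i_{(1)}\le\dots\le q^i_{(n)}$, $m_i=\max\{j:q^i_{(j)}<1/j\}$ and $\mathcal{I}_{m_i}=\{do(X^i_{(j)}=1):q^i_{(j)}<1/j\}$. Expectations are over the randomness of the instance and the algorithm. *)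

theory Defs
  imports "HOL-Probability.Probability"
begin

text \<open>Interventions at an intermediate state: the empty intervention do(),
  or do(X_j = v) for a variable index j (0-based, j < n).\<close>
datatype interv = Obs | Do nat bool

definition interventions :: "nat \<Rightarrow> interv set" where
  "interventions n = {Obs} \<union> {Do j v | j v. j < n}"

definition apply_int :: "interv \<Rightarrow> (nat \<Rightarrow> bool) \<Rightarrow> (nat \<Rightarrow> bool)" where
  "apply_int a x = (case a of Obs \<Rightarrow> x | Do j v \<Rightarrow> x(j := v))"

text \<open>A round record: intervention at state 0, observation at state 0,
  intermediate state visited, intervention performed there, observed values X^i.\<close>
datatype ('a, 'b) rnd = Rnd (act0: 'a) (obs0: 'b) (st: nat) (act: interv) (xs: "nat \<Rightarrow> bool")

text \<open>Distribution of the history after t rounds.  pol0/pol1 is the (randomised,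
  history dependent) algorithm, tr the (random) transition from state 0.\<close>
fun run :: "nat \<Rightarrow> (nat \<Rightarrow> nat \<Rightarrow> real) \<Rightarrow> (('a,'b) rnd list \<Rightarrow> 'a pmf)
   \<Rightarrow> (('a,'b) rnd list \<Rightarrow> 'a \<Rightarrow> 'b \<Rightarrow> nat \<Rightarrow> interv pmf) \<Rightarrow> ('a \<Rightarrow> ('b \<times> nat) pmf)
   \<Rightarrow> nat \<Rightarrow> ('a,'b) rnd list pmf" where
  "run n q pol0 pol1 tr 0 = return_pmf []"
| "run n q pol0 pol1 tr (Suc t) =
     bind_pmf (run n q pol0 pol1 tr t) (\<lambda>h.
     bind_pmf (pol0 h) (\<lambda>a0.
     bind_pmf (tr a0) (\<lambda>(ob, s).
     bind_pmf (pol1 h a0 ob s) (\<lambda>a.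
     bind_pmf (Pi_pmf {..<n} False (\<lambda>j. bernoulli_pmf (q s j))) (\<lambda>x.
     return_pmf (h @ [Rnd a0 ob s a (apply_int a x)]))))))"

definition visits :: "('a,'b) rnd list \<Rightarrow> nat \<Rightarrow> nat" where
  "visits h s = length (filter (\<lambda>r. st r = s) h)"

definition performed :: "('a,'b) rnd list \<Rightarrow> interv \<Rightarrow> nat \<Rightarrow> nat" where
  "performed h a s = length (filter (\<lambda>r. st r = s \<and> act r = a) h)"

definition observed :: "('a,'b) rnd list \<Rightarrow> interv \<Rightarrow> nat \<Rightarrow> nat" where
  "observed h a s = length (filter (\<lambda>r. st r = s \<and>
       (case a of Obs \<Rightarrow> True | Do j v \<Rightarrow> xs r j = v)) h)"

text \<open>Given a sorting permutation sigma of the indices (position l, 0-based,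
  corresponds to rank l+1), m_i and the set I_{m_i}.\<close>
definition m_idx :: "nat \<Rightarrow> (nat \<Rightarrow> real) \<Rightarrow> (nat \<Rightarrow> nat) \<Rightarrow> nat" where
  "m_idx n qi \<sigma> = Max ({0} \<union> {Suc l | l. l < n \<and> qi (\<sigma> l) < 1 / real (Suc l)})"

definition I_m :: "nat \<Rightarrow> (nat \<Rightarrow> real) \<Rightarrow> (nat \<Rightarrow> nat) \<Rightarrow> interv set" where
  "I_m n qi \<sigma> = {Do (\<sigma> l) True | l. l < n \<and> qi (\<sigma> l) < 1 / real (Suc l)}"

end

theory Submission
  imports Defs
begin

text \<open>Let \<open>a = do(X_j = 1)\<close> and \<open>c = q_j\<close>.  In a round at state \<open>i\<close>, the indicator
  that \<open>a\<close> is observed exceeds the indicator that \<open>a\<close> is performed by at most \<open>c\<close> in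
  conditional expectation: performing \<open>a\<close> gives excess \<open>0\<close>, performing \<open>do(X_j = 0)\<close>
  gives \<open>0\<close>, and any other intervention leaves \<open>X_j\<close> a Bernoulli(\<open>c\<close>) variable.  Hence
  \<open>observed - performed - c \<cdot> visits\<close> is a supermartingale started at \<open>0\<close>, so
  \<open>E[T_(a,i)] \<le> N_(a,i) + c Tr_i\<close>.  Since \<open>a \<in> \<I>_{m_i}\<close> and the \<open>q_j\<close> are sorted,
  \<open>c \<le> q_(m_i) < 1/m_i\<close>, and \<open>N_(a,i) \<le> 2 Tr_i / m_i\<close> gives the bound.\<close>

lemma integrable_measure_pmf_bounded:
  fixes g :: "'a \<Rightarrow> real"
  assumes "\<And>x. x \<in> set_pmf p \<Longrightarrow> \<bar>g x\<bar> \<le> B"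
  shows "integrable (measure_pmf p) g"
  by (rule measure_pmf.integrable_const_bound[where B=B]) (auto simp: AE_measure_pmf_iff assms)

lemma abs_integral_measure_pmf_le:
  fixes g :: "'a \<Rightarrow> real"
  assumes "\<And>x. x \<in> set_pmf p \<Longrightarrow> \<bar>g x\<bar> \<le> B"
  shows "\<bar>measure_pmf.expectation p g\<bar> \<le> B"
proof -
  have "integrable (measure_pmf p) g"
    using assms by (rule integrable_measure_pmf_bounded)
  moreover have "g x \<le> B" "- B \<le> g x" if "x \<in> set_pmf p" for x
    using assms[OF that] by linarith+
  ultimately have "measure_pmf.expectation p g \<le> B" "- B \<le> measure_pmf.expectation p g"
    by (auto intro!: measure_pmf.integral_le_const measure_pmf.integral_ge_const
             simp: AE_measure_pmf_iff)
  then show ?thesis by linarith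
qed

lemma integral_bind_pmf:
  fixes g :: "'b \<Rightarrow> real"
  assumes bounded: "\<And>y. y \<in> set_pmf (bind_pmf p f) \<Longrightarrow> \<bar>g y\<bar> \<le> B"
  shows "measure_pmf.expectation (bind_pmf p f) g
       = measure_pmf.expectation p (\<lambda>x. measure_pmf.expectation (f x) g)"
proof -
  \<comment> \<open>The Giry-monad rule needs a globally bounded integrand, so cut \<open>g\<close> off outside the support.\<close>
  define g' where "g' y = (if y \<in> set_pmf (bind_pmf p f) then g y else 0)" for y
  have "measure_pmf.expectation (bind_pmf p f) g = measure_pmf.expectation (bind_pmf p f) g'"
    by (intro integral_cong_AE) (auto simp: AE_measure_pmf_iff g'_def)
  also have "\<dots> = measure_pmf.expectation p (\<lambda>x. measure_pmf.expectation (f x) g')"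
    unfolding measure_pmf_bind
    by (rule integral_bind[where K="count_space UNIV" and B="max 0 B" and B'=1])
       (use bounded in \<open>auto simp: g'_def measurable_measure_pmf measure_pmf.emeasure_space_1
             space_subprob_algebra measure_pmf.subprob_space_axioms le_max_iff_disj
             intro: measure_pmf.finite_measure_axioms\<close>)
  also have "\<dots> = measure_pmf.expectation p (\<lambda>x. measure_pmf.expectation (f x) g)"
    by (intro integral_cong_AE) (auto simp: AE_measure_pmf_iff g'_def intro!: integral_cong_AE)
  finally show ?thesis .
qed

lemma integral_bind_pmf_le:
  fixes g :: "'b \<Rightarrow> real"
  assumes bounded: "\<And>y. y \<in> set_pmf (bind_pmf p f) \<Longrightarrow> \<bar>g y\<bar> \<le> B"
    and le: "\<And>x. x \<in> set_pmf p \<Longrightarrow> measure_pmf.expectation (f x) g \<le> c"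
  shows "measure_pmf.expectation (bind_pmf p f) g \<le> c"
proof -
  have "\<bar>measure_pmf.expectation (f x) g\<bar> \<le> B" if "x \<in> set_pmf p" for x
    using that bounded by (intro abs_integral_measure_pmf_le) auto
  then have "measure_pmf.expectation p (\<lambda>x. measure_pmf.expectation (f x) g) \<le> c"
    using le by (intro measure_pmf.integral_le_const integrable_measure_pmf_bounded)
                (auto simp: AE_measure_pmf_iff)
  then show ?thesis
    using integral_bind_pmf[of p f g B] bounded by simp
qed

definition round_pmf :: "nat \<Rightarrow> (nat \<Rightarrow> nat \<Rightarrow> real) \<Rightarrow> (('a,'b) rnd list \<Rightarrow> 'a pmf)
    \<Rightarrow> (('a,'b) rnd list \<Rightarrow> 'a \<Rightarrow> 'b \<Rightarrow> nat \<Rightarrow> interv pmf) \<Rightarrow> ('a \<Rightarrow> ('b \<times> nat) pmf)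
    \<Rightarrow> ('a,'b) rnd list \<Rightarrow> ('a,'b) rnd pmf" where
  "round_pmf n q pol0 pol1 tr h =
     bind_pmf (pol0 h) (\<lambda>a0.
     bind_pmf (tr a0) (\<lambda>(ob, s).
     bind_pmf (pol1 h a0 ob s) (\<lambda>a.
     map_pmf (\<lambda>x. Rnd a0 ob s a (apply_int a x)) (Pi_pmf {..<n} False (\<lambda>j. bernoulli_pmf (q s j))))))"

lemma run_Suc_round_pmf:
  "run n q pol0 pol1 tr (Suc t) =
     bind_pmf (run n q pol0 pol1 tr t) (\<lambda>h. map_pmf (\<lambda>r. h @ [r]) (round_pmf n q pol0 pol1 tr h))"
  by (simp add: round_pmf_def map_pmf_def bind_assoc_pmf bind_return_pmf case_prod_unfold)

lemma length_run: "h \<in> set_pmf (run n q pol0 pol1 tr t) \<Longrightarrow> length h = t"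
  by (induction t arbitrary: h) (auto simp: set_bind_pmf split: prod.splits)

lemma integrable_run:
  fixes g :: "('a,'b) rnd list \<Rightarrow> real"
  assumes "\<And>h. \<bar>g h\<bar> \<le> B * real (length h)"
  shows "integrable (measure_pmf (run n q pol0 pol1 tr t)) g"
  by (rule integrable_measure_pmf_bounded[where B="B * real t"]) (metis assms length_run)

lemma expectation_run_sum_list_nonpos:
  fixes \<delta> :: "('a,'b) rnd \<Rightarrow> real"
  assumes bounded: "\<And>r. \<bar>\<delta> r\<bar> \<le> B"
    and drift: "\<And>h. measure_pmf.expectation (round_pmf n q pol0 pol1 tr h) \<delta> \<le> 0"
  shows "measure_pmf.expectation (run n q pol0 pol1 tr t) (\<lambda>h. \<Sum>r\<leftarrow>h. \<delta> r) \<le> 0"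
proof (induction t)
  case 0
  then show ?case by simp
next
  case (Suc t)
  let ?F = "\<lambda>h. \<Sum>r\<leftarrow>h. \<delta> r"
  let ?R = "round_pmf n q pol0 pol1 tr"
  have F_bound: "\<bar>?F h\<bar> \<le> B * real (length h)" for h
    by (induction h) (auto simp: algebra_simps intro: order.trans[OF abs_triangle_ineq] add_mono bounded)
  have integrable_\<delta>: "integrable (measure_pmf p) \<delta>" for p
    using bounded by (rule integrable_measure_pmf_bounded)
  have step: "measure_pmf.expectation (map_pmf (\<lambda>r. h @ [r]) (?R h)) ?F
      = ?F h + measure_pmf.expectation (?R h) \<delta>" for h
    using integrable_\<delta> by simp
  have "measure_pmf.expectation (run n q pol0 pol1 tr (Suc t)) ?F
      = measure_pmf.expectation (run n q pol0 pol1 tr t)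
          (\<lambda>h. ?F h + measure_pmf.expectation (?R h) \<delta>)"
    unfolding run_Suc_round_pmf step[symmetric]
    by (rule integral_bind_pmf[where B="B * real (Suc t)"])
       (metis F_bound length_run run_Suc_round_pmf)
  also have "\<dots> = measure_pmf.expectation (run n q pol0 pol1 tr t) ?F
      + measure_pmf.expectation (run n q pol0 pol1 tr t) (\<lambda>h. measure_pmf.expectation (?R h) \<delta>)"
    using F_bound bounded
    by (intro Bochner_Integration.integral_add integrable_run integrable_measure_pmf_bounded
              abs_integral_measure_pmf_le)
  also have "\<dots> \<le> 0"
  proof -
    have "measure_pmf.expectation (run n q pol0 pol1 tr t)
            (\<lambda>h. measure_pmf.expectation (?R h) \<delta>) \<le> 0"
      using drift bounded
      by (intro measure_pmf.integral_le_const integrable_measure_pmf_bounded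
                abs_integral_measure_pmf_le) auto
    then show ?thesis using Suc.IH by linarith
  qed
  finally show ?case .
qed

definition observation_excess :: "real \<Rightarrow> nat \<Rightarrow> nat \<Rightarrow> ('a,'b) rnd \<Rightarrow> real" where
  "observation_excess c j s r =
     (if st r = s then of_bool (xs r j) - of_bool (act r = Do j True) - c else 0)"

lemma sum_list_observation_excess:
  "(\<Sum>r\<leftarrow>h. observation_excess c j s r)
     = real (observed h (Do j True) s) - real (performed h (Do j True) s) - c * real (visits h s)"
  by (induction h)
     (auto simp: observation_excess_def observed_def performed_def visits_def algebra_simps)

lemma abs_observation_excess_le:
  "0 \<le> c \<Longrightarrow> c \<le> 1 \<Longrightarrow> \<bar>observation_excess c j s r\<bar> \<le> 2"
  by (simp add: observation_excess_def)

lemma expectation_observation_excess_intervened_nonpos: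
  assumes c: "0 \<le> q s j" "q s j \<le> 1" and j: "j < n"
  shows "measure_pmf.expectation (Pi_pmf {..<n} False (\<lambda>j. bernoulli_pmf (q s' j)))
           (\<lambda>x. observation_excess (q s j) j s (Rnd a0 ob s' a (apply_int a x))) \<le> 0"
proof (cases "s' = s")
  case True
  define G where "G b = of_bool (if a = Do j True then True else if a = Do j False then False else b)
      - of_bool (a = Do j True) - q s j" for b
  have "observation_excess (q s j) j s (Rnd a0 ob s' a (apply_int a x)) = G (x j)" for x
    using True by (auto simp: observation_excess_def G_def apply_int_def split: interv.splits)
  then have "measure_pmf.expectation (Pi_pmf {..<n} False (\<lambda>j. bernoulli_pmf (q s' j)))
           (\<lambda>x. observation_excess (q s j) j s (Rnd a0 ob s' a (apply_int a x)))
      = measure_pmf.expectation (map_pmf (\<lambda>x. x j) (Pi_pmf {..<n} False (\<lambda>j. bernoulli_pmf (q s' j)))) G"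
    by simp
  also have "\<dots> = G True * q s j + G False * (1 - q s j)"
    using j True c by (simp add: Pi_pmf_component)
  also have "\<dots> \<le> 0"
    using c by (auto simp: G_def algebra_simps)
  finally show ?thesis .
qed (simp add: observation_excess_def)

lemma expectation_observation_excess_round_nonpos:
  assumes c: "0 \<le> q s j" "q s j \<le> 1" and j: "j < n"
  shows "measure_pmf.expectation (round_pmf n q pol0 pol1 tr h) (observation_excess (q s j) j s) \<le> 0"
  unfolding round_pmf_def
proof (intro integral_bind_pmf_le[where B=2])
  fix a0 obs a
  assume "obs \<in> set_pmf (tr a0)"
  show "measure_pmf.expectation (case obs of (ob, s') \<Rightarrow> bind_pmf (pol1 h a0 ob s') (\<lambda>a.
     map_pmf (\<lambda>x. Rnd a0 ob s' a (apply_int a x)) (Pi_pmf {..<n} False (\<lambda>j. bernoulli_pmf (q s' j)))))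
     (observation_excess (q s j) j s) \<le> 0"
    using c j
    by (auto split: prod.split intro!: integral_bind_pmf_le[where B=2] abs_observation_excess_le
             expectation_observation_excess_intervened_nonpos)
qed (use c in \<open>auto intro: abs_observation_excess_le\<close>)

lemma expectation_observed_le:
  assumes c: "0 \<le> q s j" "q s j \<le> 1" and j: "j < n"
  shows "measure_pmf.expectation (run n q pol0 pol1 tr t) (\<lambda>h. real (observed h (Do j True) s))
    \<le> measure_pmf.expectation (run n q pol0 pol1 tr t) (\<lambda>h. real (performed h (Do j True) s))
      + q s j * measure_pmf.expectation (run n q pol0 pol1 tr t) (\<lambda>h. real (visits h s))"
proof -
  let ?E = "measure_pmf.expectation (run n q pol0 pol1 tr t)"
  have counts_le_length: "observed h a s \<le> length h" "performed h a s \<le> length h" "visits h s \<le> length h"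
    for h :: "('a,'b) rnd list" and a
    unfolding observed_def performed_def visits_def by (rule length_filter_le)+
  have "?E (\<lambda>h. real (observed h (Do j True) s)) - ?E (\<lambda>h. real (performed h (Do j True) s))
      - q s j * ?E (\<lambda>h. real (visits h s)) = ?E (\<lambda>h. \<Sum>r\<leftarrow>h. observation_excess (q s j) j s r)"
    unfolding sum_list_observation_excess
    by (simp add: counts_le_length integrable_run[where B=1] integral_diff)
  also have "\<dots> \<le> 0"
    using c j
    by (intro expectation_run_sum_list_nonpos[where B=2] abs_observation_excess_le
              expectation_observation_excess_round_nonpos)
  finally show ?thesis by linarith
qed

lemma I_m_below_inverse_m_idx:
  assumes a: "a \<in> I_m n qi \<sigma>"
    and sorted: "\<And>l1 l2. l1 \<le> l2 \<Longrightarrow> l2 < n \<Longrightarrow> qi (\<sigma> l1) \<le> qi (\<sigma> l2)"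
  shows "\<exists>l<n. a = Do (\<sigma> l) True \<and> qi (\<sigma> l) < 1 / real (m_idx n qi \<sigma>)"
proof -
  define S where "S = {Suc l | l. l < n \<and> qi (\<sigma> l) < 1 / real (Suc l)}"
  obtain l where l: "a = Do (\<sigma> l) True" "l < n" "qi (\<sigma> l) < 1 / real (Suc l)"
    using a unfolding I_m_def by blast
  have m: "m_idx n qi \<sigma> = Max ({0} \<union> S)"
    unfolding m_idx_def S_def by simp
  have fin: "finite ({0} \<union> S)"
    by (rule finite_subset[of _ "{..n}"]) (auto simp: S_def)
  have "Suc l \<le> m_idx n qi \<sigma>"
    unfolding m using fin l by (intro Max_ge) (auto simp: S_def)
  moreover have "m_idx n qi \<sigma> \<in> {0} \<union> S"
    unfolding m using fin by (intro Max_in) auto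
  ultimately obtain l' where l': "m_idx n qi \<sigma> = Suc l'" "l' < n" "qi (\<sigma> l') < 1 / real (Suc l')"
    unfolding S_def by auto
  then have "qi (\<sigma> l) \<le> qi (\<sigma> l')"
    using \<open>Suc l \<le> m_idx n qi \<sigma>\<close> sorted by simp
  with l l' show ?thesis by auto
qed

theorem proposition2:
  fixes n k T i :: nat
    and q :: "nat \<Rightarrow> nat \<Rightarrow> real"
    and pol0 :: "('a,'b) rnd list \<Rightarrow> 'a pmf"
    and pol1 :: "('a,'b) rnd list \<Rightarrow> 'a \<Rightarrow> 'b \<Rightarrow> nat \<Rightarrow> interv pmf"
    and tr :: "'a \<Rightarrow> ('b \<times> nat) pmf"
    and \<sigma> :: "nat \<Rightarrow> nat"
    and a :: interv
  assumes q_range: "\<And>s j. s \<in> {1..k} \<Longrightarrow> j < n \<Longrightarrow> 0 \<le> q s j \<and> q s j \<le> 1"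
    and trans_range: "\<And>a0. set_pmf (tr a0) \<subseteq> UNIV \<times> {1..k}"
    and pol1_range: "\<And>h a0 ob s. set_pmf (pol1 h a0 ob s) \<subseteq> interventions n"
    and i_state: "i \<in> {1..k}"
    and sort_bij: "bij_betw \<sigma> {..<n} {..<n}"
    and sort_mono: "\<And>l1 l2. l1 \<le> l2 \<Longrightarrow> l2 < n \<Longrightarrow> q i (\<sigma> l1) \<le> q i (\<sigma> l2)"
    and m_pos: "m_idx n (q i) \<sigma> \<ge> 1"
    and a_in_J: "a \<in> I_m n (q i) \<sigma>"
      "measure_pmf.expectation (run n q pol0 pol1 tr T) (\<lambda>h. real (performed h a i))
         \<le> 2 * measure_pmf.expectation (run n q pol0 pol1 tr T) (\<lambda>h. real (visits h i))
             / real (m_idx n (q i) \<sigma>)"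
  shows "measure_pmf.expectation (run n q pol0 pol1 tr T) (\<lambda>h. real (observed h a i))
         \<le> 3 * measure_pmf.expectation (run n q pol0 pol1 tr T) (\<lambda>h. real (visits h i))
             / real (m_idx n (q i) \<sigma>)"
proof -
  let ?E = "measure_pmf.expectation (run n q pol0 pol1 tr T)"
  define m where "m = real (m_idx n (q i) \<sigma>)"
  obtain l where l: "l < n" "a = Do (\<sigma> l) True" "q i (\<sigma> l) < 1 / m"
    using I_m_below_inverse_m_idx[OF a_in_J(1) sort_mono] unfolding m_def by blast
  have j: "\<sigma> l < n"
    using sort_bij l(1) by (meson bij_betwE lessThan_iff)
  have "?E (\<lambda>h. real (observed h a i))
      \<le> ?E (\<lambda>h. real (performed h a i)) + q i (\<sigma> l) * ?E (\<lambda>h. real (visits h i))"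
    unfolding l(2) using q_range[OF i_state j] j by (intro expectation_observed_le) auto
  also have "\<dots> \<le> 2 * ?E (\<lambda>h. real (visits h i)) / m + 1 / m * ?E (\<lambda>h. real (visits h i))"
    using a_in_J(2) l(3) unfolding m_def by (intro add_mono mult_right_mono) auto
  also have "\<dots> = 3 * ?E (\<lambda>h. real (visits h i)) / m"
    by (simp add: field_simps)
  finally show ?thesis unfolding m_def .
qed

end
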